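(* Let $n$ be an integer with $1\le n\le d'-2$ and let $\{h_i\}_{i=0}^{n+1}$ be a sequence in $\mathbb F$ such that (i) $h_{i+2}-h_{i-1}=(q^2+1+q^{-2})(h_{i+1}-h_i)$ for all $i=1,2,\dots,n-1$, and (ii) there are integers $0\le j<k<\ell\le n+1$ with $h_j=h_k=h_\ell=0$. Then $h_i=0$ for all $i=0,1,\dots,n+1$.
   Context: $\mathbb F$ is an algebraically closed field and $q\in\mathbb F^\times$ is a root of unity of order $d\notin\{1,2,4\}$; $d'=d$ if $d$ is odd and $d'=d/2$ if $d$ is even (the order of $q^2$). *)

theory Defs
  imports "HOL-Computational_Algebra.Polynomial"
begin

definition alg_closed_field :: "'a::field itself \<Rightarrow> bool" where
  "alg_closed_field _ \<longleftrightarrow> (\<forall>p::'a poly. degree p \<ge> 1 \<longrightarrow> (\<exists>x. poly p x = 0))"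

definition root_of_unity_of_order :: "'a::field \<Rightarrow> nat \<Rightarrow> bool" where
  "root_of_unity_of_order q d \<longleftrightarrow> d > 0 \<and> q ^ d = 1 \<and> (\<forall>m. 0 < m \<and> m < d \<longrightarrow> q ^ m \<noteq> 1)"

text \<open>d' = d if d odd, d/2 if d even (the order of q^2).\<close>
definition dprime :: "nat \<Rightarrow> nat" where
  "dprime d = (if odd d then d else d div 2)"

end

theory Submission
  imports Defs
begin

text \<open>With \<open>r = q\<^sup>2\<close> the recurrence is a third-order linear recurrence whose characteristic
  polynomial is \<open>(x - 1)(x - r)(x - r\<inverse>)\<close>. These roots are distinct, so
  \<open>h i = a + b r^i + c r^(-i)\<close> on \<open>0..n+1\<close>. Multiplying by \<open>r^i\<close>, each zero of \<open>h\<close>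
  gives a root \<open>r^i\<close> of the quadratic \<open>c + a X + b X\<^sup>2\<close>; as \<open>r\<close> has order \<open>d' > n + 1\<close>, the
  three zeros give three distinct roots, so \<open>a = b = c = 0\<close>.\<close>

definition solves_recurrence :: "'a::ring \<Rightarrow> nat \<Rightarrow> (nat \<Rightarrow> 'a) \<Rightarrow> bool" where
  "solves_recurrence t N h \<longleftrightarrow>
     (\<forall>i. i + 3 \<le> N \<longrightarrow> h (i + 3) - h i = t * (h (i + 2) - h (i + 1)))"

lemma solves_recurrence_eq_on_initial:
  assumes "solves_recurrence t N f" "solves_recurrence t N h"
    and "f 0 = h 0" "f 1 = h 1" "f 2 = h 2" "i \<le> N"
  shows "f i = h i"
  using \<open>i \<le> N\<close>
proof (induction i rule: less_induct)
  case (less i)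
  show ?case
  proof (cases "i \<le> 2")
    case True
    then consider "i = 0" | "i = 1" | "i = 2" by linarith
    then show ?thesis using assms(3-5) by cases auto
  next
    case False
    define p where "p = i - 3"
    with False have i: "i = p + 3" by simp
    have step: "g (p + 3) = t * (g (p + 2) - g (p + 1)) + g p" if "solves_recurrence t N g" for g
      using that less.prems i by (simp add: solves_recurrence_def diff_eq_eq)
    have "f (p + 3) = t * (f (p + 2) - f (p + 1)) + f p"
      using step assms(1) .
    also have "\<dots> = t * (h (p + 2) - h (p + 1)) + h p"
      using less.IH less.prems i by simp
    also have "\<dots> = h (p + 3)"
      using step assms(2) by simp
    finally show ?thesis using i by simp
  qed
qed

lemma power_solves_recurrence:
  fixes x y :: "'a::comm_ring_1"
  assumes "x * y = 1"
  shows "solves_recurrence (x + 1 + y) N (\<lambda>i. x ^ i)"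
  unfolding solves_recurrence_def
proof (intro allI impI)
  fix i
  have "(x + 1 + y) * (x ^ (i + 2) - x ^ (i + 1)) = x ^ i * (x ^ 3 - x + (x * y) * x - x * y)"
    by (simp add: algebra_simps power_add power2_eq_square power3_eq_cube)
  also have "\<dots> = x ^ (i + 3) - x ^ i"
    using assms by (simp add: algebra_simps power_add)
  finally show "x ^ (i + 3) - x ^ i = (x + 1 + y) * (x ^ (i + 2) - x ^ (i + 1))" ..
qed

lemma solves_recurrence_affine_combination:
  fixes f g :: "nat \<Rightarrow> 'a::comm_ring"
  assumes "solves_recurrence t N f" "solves_recurrence t N g"
  shows "solves_recurrence t N (\<lambda>i. a + b * f i + c * g i)"
  unfolding solves_recurrence_def
proof (intro allI impI)
  fix i
  assume "i + 3 \<le> N"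
  then have f: "f (i + 3) - f i = t * (f (i + 2) - f (i + 1))"
    and g: "g (i + 3) - g i = t * (g (i + 2) - g (i + 1))"
    using assms by (simp_all add: solves_recurrence_def)
  have "(a + b * f (i + 3) + c * g (i + 3)) - (a + b * f i + c * g i)
      = b * (f (i + 3) - f i) + c * (g (i + 3) - g i)"
    by (simp add: algebra_simps)
  also have "\<dots> = t * ((a + b * f (i + 2) + c * g (i + 2)) - (a + b * f (i + 1) + c * g (i + 1)))"
    unfolding f g by (simp add: algebra_simps)
  finally show "(a + b * f (i + 3) + c * g (i + 3)) - (a + b * f i + c * g i)
      = t * ((a + b * f (i + 2) + c * g (i + 2)) - (a + b * f (i + 1) + c * g (i + 1)))" .
qed

lemma exists_coeffs_initial_values:
  fixes x y :: "'a::field"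
  assumes "x \<noteq> 1" "y \<noteq> 1" "x \<noteq> y"
  shows "\<exists>a b c. a + b + c = u0 \<and> a + b * x + c * y = u1 \<and> a + b * x\<^sup>2 + c * y\<^sup>2 = u2"
proof -
  txt \<open>Substituting \<open>B = b (x - 1)\<close> and \<open>C = c (y - 1)\<close> leaves a \<open>2 \<times> 2\<close> Vandermonde system.\<close>
  define B where "B = (u2 - u1 - y * (u1 - u0)) / (x - y)"
  define C where "C = (x * (u1 - u0) - (u2 - u1)) / (x - y)"
  have "x - y \<noteq> 0" using assms(3) by simp
  then have BC: "B + C = u1 - u0" "x * B + y * C = u2 - u1"
    by (simp_all add: B_def C_def divide_simps) (simp_all add: algebra_simps)
  obtain b c where bc: "b * (x - 1) = B" "c * (y - 1) = C"
    using assms(1,2) by (metis diff_eq_diff_eq diff_self nonzero_divide_eq_eq)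
  have "u0 - b - c + b * x + c * y = u0 + (B + C)"
    unfolding bc[symmetric] by (simp add: algebra_simps)
  moreover have "u0 - b - c + b * x\<^sup>2 + c * y\<^sup>2 = u0 + (B + C) + (x * B + y * C)"
    unfolding bc[symmetric] by (simp add: algebra_simps power2_eq_square)
  ultimately show ?thesis
    using BC by (intro exI[of _ "u0 - b - c"] exI[of _ b] exI[of _ c]) simp
qed

lemma solves_recurrence_closed_form:
  fixes x y :: "'a::field"
  assumes "x * y = 1" "x\<^sup>2 \<noteq> 1" "solves_recurrence (x + 1 + y) N h"
  shows "\<exists>a b c. \<forall>i \<le> N. h i = a + b * x ^ i + c * y ^ i"
proof -
  have x1: "x \<noteq> 1" using assms(2) by auto
  have y1: "y \<noteq> 1" using assms(1) x1 by auto
  have xy: "x \<noteq> y" using assms(1,2) by (auto simp: power2_eq_square)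
  obtain a b c where abc: "a + b + c = h 0" "a + b * x + c * y = h 1"
      "a + b * x\<^sup>2 + c * y\<^sup>2 = h 2"
    using exists_coeffs_initial_values[OF x1 y1 xy] by blast
  have "y * x = 1" using assms(1) by (simp add: mult.commute)
  then have "solves_recurrence (x + 1 + y) N (\<lambda>i. y ^ i)"
    using power_solves_recurrence[of y x] by (simp add: ac_simps)
  then have "solves_recurrence (x + 1 + y) N (\<lambda>i. a + b * x ^ i + c * y ^ i)"
    by (rule solves_recurrence_affine_combination[OF power_solves_recurrence[OF assms(1)]])
  then have "a + b * x ^ i + c * y ^ i = h i" if "i \<le> N" for i
    using solves_recurrence_eq_on_initial[OF _ assms(3) _ _ _ that] abc by simp
  then show ?thesis by metis
qed

lemma quadratic_three_roots_eq_0: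
  fixes a b c x y z :: "'a::field"
  assumes "c + a * x + b * x\<^sup>2 = 0" "c + a * y + b * y\<^sup>2 = 0" "c + a * z + b * z\<^sup>2 = 0"
    and "x \<noteq> y" "x \<noteq> z" "y \<noteq> z"
  shows "a = 0 \<and> b = 0 \<and> c = 0"
proof -
  have diff: "(u - v) * (a + b * (u + v)) = (c + a * u + b * u\<^sup>2) - (c + a * v + b * v\<^sup>2)" for u v
    by (simp add: algebra_simps power2_eq_square)
  have xy: "a + b * (x + y) = 0" using diff[of x y] assms(1,2,4) by simp
  have xz: "a + b * (x + z) = 0" using diff[of x z] assms(1,3,5) by simp
  have "b * (y - z) = 0"
    using arg_cong2[OF xy xz, of "(-)"] by (simp add: algebra_simps)
  then have "b = 0" using assms(6) by simp
  with xy assms(1) show ?thesis by simp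
qed

lemma closed_form_three_zeros:
  fixes x y :: "'a::field"
  assumes "x * y = 1" "x ^ j \<noteq> x ^ k" "x ^ j \<noteq> x ^ l" "x ^ k \<noteq> x ^ l"
    and "\<And>i. i \<in> {j, k, l} \<Longrightarrow> a + b * x ^ i + c * y ^ i = 0"
  shows "a = 0 \<and> b = 0 \<and> c = 0"
proof -
  have "c + a * x ^ i + b * (x ^ i)\<^sup>2 = 0" if "i \<in> {j, k, l}" for i
  proof -
    have "c + a * x ^ i + b * (x ^ i)\<^sup>2 = x ^ i * (a + b * x ^ i + c * y ^ i)"
      using assms(1) by (simp add: algebra_simps power2_eq_square flip: power_mult_distrib)
    then show ?thesis using assms(5) that by simp
  qed
  then show ?thesis using quadratic_three_roots_eq_0 assms(2-4) by (metis insertCI)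
qed

lemma root_of_unity_of_order_nonzero:
  assumes "root_of_unity_of_order q d"
  shows "q \<noteq> 0"
  using assms by (auto simp: root_of_unity_of_order_def power_0_left)

lemma root_of_unity_of_order_dvd:
  assumes "root_of_unity_of_order q d" "q ^ m = 1"
  shows "d dvd m"
proof -
  have d: "d > 0" "q ^ d = 1" "\<And>m. 0 < m \<Longrightarrow> m < d \<Longrightarrow> q ^ m \<noteq> 1"
    using assms(1) unfolding root_of_unity_of_order_def by auto
  have "q ^ m = q ^ (m mod d) * (q ^ d) ^ (m div d)"
    by (metis mod_div_mult_eq power_add power_mult mult.commute)
  then have "q ^ (m mod d) = 1" using assms(2) d(2) by simp
  then have "m mod d = 0" using d by (meson mod_less_divisor not_gr0)
  then show ?thesis by auto
qed

lemma root_of_unity_of_order_square_power_ne_1: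
  assumes "root_of_unity_of_order q d" "0 < m" "m < dprime d"
  shows "(q\<^sup>2) ^ m \<noteq> 1"
proof
  assume "(q\<^sup>2) ^ m = 1"
  then have dvd: "d dvd 2 * m"
    using root_of_unity_of_order_dvd assms(1) by (metis power_mult)
  show False
  proof (cases "odd d")
    case True
    then have "d dvd m" using dvd by (simp add: coprime_dvd_mult_right_iff)
    then show False using assms(2,3) True by (simp add: dprime_def nat_dvd_not_less)
  next
    case False
    then have "2 * m < d" using assms(3) by (auto simp: dprime_def)
    then show False using dvd assms(2) by (simp add: nat_dvd_not_less)
  qed
qed

lemma power_inj_below_order:
  fixes x :: "'a::field"
  assumes "x \<noteq> 0" "\<And>m. 0 < m \<Longrightarrow> m < M \<Longrightarrow> x ^ m \<noteq> 1" "i < j" "j < M"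
  shows "x ^ i \<noteq> x ^ j"
proof
  assume "x ^ i = x ^ j"
  also have "x ^ j = x ^ i * x ^ (j - i)"
    using assms(3) by (simp flip: power_add)
  finally have "x ^ (j - i) = 1" using assms(1) by simp
  then show False using assms(2)[of "j - i"] assms(3,4) by simp
qed

lemma root_of_unity_of_order_square_power_inj:
  assumes "root_of_unity_of_order q d" "i < j" "j < dprime d"
  shows "(q\<^sup>2) ^ i \<noteq> (q\<^sup>2) ^ j"
  using root_of_unity_of_order_nonzero[OF assms(1)]
  by (intro power_inj_below_order[OF _ root_of_unity_of_order_square_power_ne_1[OF assms(1)] assms(2,3)])
    simp

theorem lemma4p2:
  fixes q :: "'a::field" and d n :: nat and h :: "nat \<Rightarrow> 'a"
  assumes "alg_closed_field TYPE('a)"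
    and "root_of_unity_of_order q d"
    and "d \<notin> {1, 2, 4}"
    and "1 \<le> n" and "n + 2 \<le> dprime d"
    and "\<And>i. 1 \<le> i \<Longrightarrow> i \<le> n - 1 \<Longrightarrow>
           h (i + 2) - h (i - 1) = (q ^ 2 + 1 + inverse q ^ 2) * (h (i + 1) - h i)"
    and "\<exists>j k l. j < k \<and> k < l \<and> l \<le> n + 1 \<and> h j = 0 \<and> h k = 0 \<and> h l = 0"
  shows "\<forall>i \<le> n + 1. h i = 0"
proof -
  have inv: "q\<^sup>2 * inverse q ^ 2 = 1"
    using root_of_unity_of_order_nonzero[OF assms(2)] by (simp add: power_inverse field_simps)
  have inj: "(q\<^sup>2) ^ i \<noteq> (q\<^sup>2) ^ i'" if "i < i'" "i' \<le> n + 1" for i i'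
    using root_of_unity_of_order_square_power_inj[OF assms(2) that(1)] that(2) assms(5) by simp
  have "solves_recurrence (q\<^sup>2 + 1 + inverse q ^ 2) (n + 1) h"
    unfolding solves_recurrence_def
  proof (intro allI impI)
    fix i
    assume "i + 3 \<le> n + 1"
    then show "h (i + 3) - h i = (q\<^sup>2 + 1 + inverse q ^ 2) * (h (i + 2) - h (i + 1))"
      using assms(6)[of "i + 1"] by (simp add: numeral_3_eq_3)
  qed
  moreover have "(q\<^sup>2)\<^sup>2 \<noteq> 1" using inj[of 0 2] assms(4) by simp
  ultimately obtain a b c
    where closed: "\<forall>i \<le> n + 1. h i = a + b * (q\<^sup>2) ^ i + c * (inverse q ^ 2) ^ i"
    using solves_recurrence_closed_form inv by blast
  obtain j k l where jkl: "j < k" "k < l" "l \<le> n + 1" "h j = 0" "h k = 0" "h l = 0"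
    using assms(7) by blast
  have "a = 0 \<and> b = 0 \<and> c = 0"
  proof (rule closed_form_three_zeros[OF inv])
    show "(q\<^sup>2) ^ j \<noteq> (q\<^sup>2) ^ k" "(q\<^sup>2) ^ j \<noteq> (q\<^sup>2) ^ l" "(q\<^sup>2) ^ k \<noteq> (q\<^sup>2) ^ l"
      using inj jkl(1-3) by simp_all
    show "a + b * (q\<^sup>2) ^ i + c * (inverse q ^ 2) ^ i = 0" if "i \<in> {j, k, l}" for i
      using that jkl closed by auto
  qed
  then show ?thesis using closed by simp
qed

end
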